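(* Let $k$ be a field and let $A$ be a $k$-algebra with filtration $A_0\subseteq A_1\subseteq\cdots$ (subspaces with $\bigcup_nA_n=A$ and $A_iA_j\subseteq A_{i+j}$). Let $R=\bigoplus_{n\ge0}x^nA_n\subseteq A[x]$ be the Rees algebra, and suppose every element of $R$ is integral over $k[x]$. Then $\operatorname{gr}(A)_{\ge1}=\bigoplus_{n\ge1}A_n/A_{n-1}$ is nil.
   Context: $A$ is associative with unit, $A[x]$ is the polynomial algebra in a central indeterminate $x$. An element $a(x)\in A[x]$ is integral over $k[x]$ if $a(x)^n+p_{n-1}(x)a(x)^{n-1}+\cdots+p_0(x)=0$ for some $n\ge1$ and $p_i(x)\in k[x]$. The associated graded algebra is $\operatorname{gr}(A)=A_0\oplus A_1/A_0\oplus A_2/A_1\oplus\cdots$ with multiplication $(a_p+A_{p-1})(a_q+A_{q-1})=a_pa_q+A_{p+q-1}$ for $a_p\in A_p,a_q\in A_q$ ($A_{-1}=\{0\}$), extended linearly. Nil means every element is nilpotent. *)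

theory Defs
  imports "HOL-Computational_Algebra.Polynomial"
begin

definition k_algebra :: "('k::field \<Rightarrow> 'a::ring_1 \<Rightarrow> 'a) \<Rightarrow> bool" where
  "k_algebra scale \<longleftrightarrow> module scale \<and>
     (\<forall>c a b. scale c (a * b) = scale c a * b \<and> scale c (a * b) = a * scale c b)"

definition algebra_filtration ::
    "('k::field \<Rightarrow> 'a::ring_1 \<Rightarrow> 'a) \<Rightarrow> (nat \<Rightarrow> 'a set) \<Rightarrow> bool" where
  "algebra_filtration scale Af \<longleftrightarrow>
     (\<forall>n. module.subspace scale (Af n)) \<and>
     (\<forall>n. Af n \<subseteq> Af (Suc n)) \<and>
     (\<Union>n. Af n) = UNIV \<and>
     (\<forall>i j a b. a \<in> Af i \<longrightarrow> b \<in> Af j \<longrightarrow> a * b \<in> Af (i + j))"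

text \<open>Elements of A[x] (x central) are finitely supported coefficient sequences.\<close>
definition apoly :: "(nat \<Rightarrow> 'a::zero) set" where
  "apoly = {f. finite {n. f n \<noteq> 0}}"

definition apoly_one :: "nat \<Rightarrow> 'a::ring_1" where
  "apoly_one = (\<lambda>n. if n = 0 then 1 else 0)"

definition apoly_mult :: "(nat \<Rightarrow> 'a::ring_1) \<Rightarrow> (nat \<Rightarrow> 'a) \<Rightarrow> nat \<Rightarrow> 'a" where
  "apoly_mult f g = (\<lambda>m. \<Sum>i\<le>m. f i * g (m - i))"

fun apoly_pow :: "(nat \<Rightarrow> 'a::ring_1) \<Rightarrow> nat \<Rightarrow> nat \<Rightarrow> 'a" where
  "apoly_pow f 0 = apoly_one"
| "apoly_pow f (Suc n) = apoly_mult (apoly_pow f n) f"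

definition kpoly_act ::
    "('k::field \<Rightarrow> 'a::ring_1 \<Rightarrow> 'a) \<Rightarrow> 'k poly \<Rightarrow> (nat \<Rightarrow> 'a) \<Rightarrow> nat \<Rightarrow> 'a" where
  "kpoly_act scale p f = (\<lambda>m. \<Sum>j\<le>m. scale (coeff p j) (f (m - j)))"

definition integral_over_kx ::
    "('k::field \<Rightarrow> 'a::ring_1 \<Rightarrow> 'a) \<Rightarrow> (nat \<Rightarrow> 'a) \<Rightarrow> bool" where
  "integral_over_kx scale f \<longleftrightarrow>
     (\<exists>n\<ge>1. \<exists>p :: nat \<Rightarrow> 'k poly.
        (\<lambda>m. apoly_pow f n m + (\<Sum>i<n. kpoly_act scale (p i) (apoly_pow f i) m)) = (\<lambda>_. 0))"

definition rees_algebra :: "(nat \<Rightarrow> 'a::ring_1 set) \<Rightarrow> (nat \<Rightarrow> 'a) set" where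
  "rees_algebra Af = {f \<in> apoly. \<forall>n. f n \<in> Af n}"

fun filt_prev :: "(nat \<Rightarrow> 'a::zero set) \<Rightarrow> nat \<Rightarrow> 'a set" where
  "filt_prev Af 0 = {0}"
| "filt_prev Af (Suc n) = Af n"

text \<open>An element of gr(A) = \<Oplus> A_n/A_{n-1} is represented by a finitely supported
  family g of representatives g n \<in> A_n of its homogeneous components g n + A_{n-1}.
  The product in gr(A) of represented elements is represented by the convolution
  apoly_mult (this is the bilinear extension of
  (a_p + A_{p-1})(a_q + A_{q-1}) = a_p a_q + A_{p+q-1}), and a represented element is
  zero iff every component g n lies in A_{n-1}.\<close>
definition gr_rep :: "(nat \<Rightarrow> 'a::ring_1 set) \<Rightarrow> (nat \<Rightarrow> 'a) \<Rightarrow> bool" where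
  "gr_rep Af g \<longleftrightarrow> g \<in> apoly \<and> (\<forall>n. g n \<in> Af n)"

definition gr_is_zero :: "(nat \<Rightarrow> 'a::ring_1 set) \<Rightarrow> (nat \<Rightarrow> 'a) \<Rightarrow> bool" where
  "gr_is_zero Af g \<longleftrightarrow> (\<forall>n. g n \<in> filt_prev Af n)"

definition gr_pos_nil :: "(nat \<Rightarrow> 'a::ring_1 set) \<Rightarrow> bool" where
  "gr_pos_nil Af \<longleftrightarrow>
     (\<forall>g. gr_rep Af g \<and> g 0 = 0 \<longrightarrow> (\<exists>N\<ge>1. gr_is_zero Af (apoly_pow g N)))"

end

theory Submission
  imports Defs "HOL-Computational_Algebra.Formal_Power_Series"
begin

unbundle fps_syntax

text \<open>Work in the Rees algebra \<open>R\<close>, viewed inside \<open>A[[x]]\<close>, and its ideal \<open>xR\<close>: the coefficientwise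
  map \<open>R \<rightarrow> gr(A)\<close> is multiplicative with kernel \<open>xR\<close>, so it suffices to show that \<open>g\<^sup>N \<in> xR\<close> for
  some \<open>N \<ge> 1\<close> whenever \<open>g \<in> R\<close> has \<open>g\<^sub>0 = 0\<close>. Modulo \<open>xR\<close> every \<open>p(x) \<in> k[x]\<close> acts as the scalar
  \<open>p(0)\<close>, so multiplying an integral equation of \<open>g\<close> by \<open>g\<close> yields \<open>\<Sum>\<^sub>i c\<^sub>i g\<^sup>i\<^sup>+\<^sup>1 \<in> xR\<close> with scalars
  \<open>c\<^sub>i \<in> k\<close>, not all zero. If \<open>c\<^sub>j\<close> is the first nonzero one, this reads \<open>g\<^sup>j\<^sup>+\<^sup>1 (c\<^sub>j + w) \<in> xR\<close>
  with \<open>w \<in> R\<close>, \<open>w\<^sub>0 = 0\<close>, and such a factor \<open>c\<^sub>j + w\<close> can be cancelled degree by degree.\<close>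

definition rees_fps :: "(nat \<Rightarrow> 'a::ring_1 set) \<Rightarrow> 'a fps set" where
  "rees_fps Af = {F. \<forall>n. F $ n \<in> Af n}"

text \<open>The ideal \<open>xR\<close> of the Rees algebra, i.e. the kernel of \<open>R \<rightarrow> gr(A)\<close>.\<close>
definition rees_kernel :: "(nat \<Rightarrow> 'a::ring_1 set) \<Rightarrow> 'a fps set" where
  "rees_kernel Af = {F. \<forall>n. F $ n \<in> filt_prev Af n}"

definition fps_scale :: "('k \<Rightarrow> 'a \<Rightarrow> 'a) \<Rightarrow> 'k \<Rightarrow> 'a fps \<Rightarrow> 'a fps" where
  "fps_scale scale c F = Abs_fps (\<lambda>n. scale c (F $ n))"

definition fps_of_kpoly :: "('k::field \<Rightarrow> 'a::ring_1 \<Rightarrow> 'a) \<Rightarrow> 'k poly \<Rightarrow> 'a fps" where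
  "fps_of_kpoly scale p = Abs_fps (\<lambda>j. scale (coeff p j) 1)"

lemma apoly_pow_eq_fps_power: "apoly_pow g n = fps_nth (Abs_fps g ^ n)"
proof (induction n)
  case 0
  show ?case by (auto simp: apoly_one_def)
next
  case (Suc n)
  then show ?case
    by (intro ext) (simp add: apoly_mult_def power_Suc2 fps_mult_nth atMost_atLeast0 del: power_Suc)
qed

locale filtered_algebra =
  fixes scale :: "'k::field \<Rightarrow> 'a::ring_1 \<Rightarrow> 'a" and Af :: "nat \<Rightarrow> 'a set"
  assumes algebra: "k_algebra scale" and filtration: "algebra_filtration scale Af"
begin

lemma module: "module scale"
  using algebra unfolding k_algebra_def by blast

lemma scale_eq_mult: "scale c a = scale c 1 * a"
  using algebra unfolding k_algebra_def by (metis mult_1)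

lemma scale_mult_right: "scale c (a * b) = a * scale c b"
  using algebra unfolding k_algebra_def by blast

lemma subspace_filtration: "module.subspace scale (Af n)"
  using filtration unfolding algebra_filtration_def by blast

lemma subspace_filt_prev: "module.subspace scale (filt_prev Af n)"
  by (cases n) (simp_all add: module.subspace_single_0[OF module] subspace_filtration)

lemma filtration_mono: "i \<le> j \<Longrightarrow> Af i \<subseteq> Af j"
  using filtration unfolding algebra_filtration_def by (metis lift_Suc_mono_le)

lemma filtration_mult: "a \<in> Af i \<Longrightarrow> b \<in> Af j \<Longrightarrow> a * b \<in> Af (i + j)"
  using filtration unfolding algebra_filtration_def by blast

lemma filt_prev_mult: "a \<in> filt_prev Af i \<Longrightarrow> b \<in> Af j \<Longrightarrow> a * b \<in> filt_prev Af (i + j)"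
  by (cases i) (auto simp: filtration_mult module.subspace_0[OF module subspace_filt_prev])

lemma rees_fps_mult: "F \<in> rees_fps Af \<Longrightarrow> H \<in> rees_fps Af \<Longrightarrow> F * H \<in> rees_fps Af"
proof (unfold rees_fps_def, intro CollectI allI, elim CollectE)
  fix n assume F: "\<forall>n. F $ n \<in> Af n" and H: "\<forall>n. H $ n \<in> Af n"
  have "F $ i * H $ (n - i) \<in> Af n" if "i \<le> n" for i
    using filtration_mult[of "F $ i" i "H $ (n - i)" "n - i"] F H that by simp
  then show "(F * H) $ n \<in> Af n"
    unfolding fps_mult_nth by (auto intro!: module.subspace_sum[OF module subspace_filtration])
qed

lemma rees_fps_power: "G \<in> rees_fps Af \<Longrightarrow> G ^ Suc m \<in> rees_fps Af"
  by (induction m) (simp_all add: power_Suc2 rees_fps_mult del: power_Suc)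

lemma rees_fps_sum: "(\<And>i. i \<in> S \<Longrightarrow> f i \<in> rees_fps Af) \<Longrightarrow> sum f S \<in> rees_fps Af"
  unfolding rees_fps_def by (auto simp: fps_sum_nth intro!: module.subspace_sum[OF module subspace_filtration])

lemma rees_fps_scale: "F \<in> rees_fps Af \<Longrightarrow> fps_scale scale c F \<in> rees_fps Af"
  unfolding rees_fps_def fps_scale_def
  by (auto intro!: module.subspace_scale[OF module subspace_filtration])

lemma rees_kernel_sum: "(\<And>i. i \<in> S \<Longrightarrow> f i \<in> rees_kernel Af) \<Longrightarrow> sum f S \<in> rees_kernel Af"
  unfolding rees_kernel_def by (auto simp: fps_sum_nth intro!: module.subspace_sum[OF module subspace_filt_prev])

lemma rees_kernel_uminus: "F \<in> rees_kernel Af \<Longrightarrow> - F \<in> rees_kernel Af"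
  unfolding rees_kernel_def by (auto intro!: module.subspace_neg[OF module subspace_filt_prev])

lemma rees_kernel_scale: "F \<in> rees_kernel Af \<Longrightarrow> fps_scale scale c F \<in> rees_kernel Af"
  unfolding rees_kernel_def fps_scale_def
  by (auto intro!: module.subspace_scale[OF module subspace_filt_prev])

lemma fps_X_mult_in_rees_kernel: "F \<in> rees_fps Af \<Longrightarrow> fps_X * F \<in> rees_kernel Af"
  unfolding rees_fps_def rees_kernel_def
proof (intro CollectI allI, elim CollectE)
  fix n assume "\<forall>n. F $ n \<in> Af n"
  then show "(fps_X * F) $ n \<in> filt_prev Af n"
    by (cases n) (auto simp: module.subspace_0[OF module subspace_filt_prev])
qed

lemma fps_scale_mult_right: "fps_scale scale c (F * H) = F * fps_scale scale c H"
  by (rule fps_ext) (simp add: fps_scale_def fps_mult_nth module.scale_sum_right[OF module]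
      scale_mult_right)

lemma fps_scale_add: "fps_scale scale c (F + H) = fps_scale scale c F + fps_scale scale c H"
  by (rule fps_ext) (simp add: fps_scale_def module.scale_right_distrib[OF module])

lemma fps_scale_scale: "fps_scale scale a (fps_scale scale b F) = fps_scale scale (a * b) F"
  by (rule fps_ext) (simp add: fps_scale_def module.scale_scale[OF module])

lemma fps_scale_one [simp]: "fps_scale scale 1 F = F"
  by (rule fps_ext) (simp add: fps_scale_def module.scale_one[OF module])

lemma fps_scale_zero [simp]: "fps_scale scale 0 F = 0"
  by (rule fps_ext) (simp add: fps_scale_def module.scale_zero_left[OF module])

lemma fps_scale_nth_0: "fps_scale scale c F $ 0 = scale c (F $ 0)"
  by (simp add: fps_scale_def)

lemma fps_const_scale_mult: "fps_const (scale c 1) * F = fps_scale scale c F"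
  by (rule fps_ext) (simp add: fps_scale_def scale_eq_mult[of c "F $ _"])

lemma kpoly_act_eq_fps_mult: "kpoly_act scale p f = fps_nth (fps_of_kpoly scale p * Abs_fps f)"
  by (rule ext) (simp add: kpoly_act_def fps_mult_nth atMost_atLeast0 fps_of_kpoly_def
      scale_eq_mult[of _ "f _"])

lemma integral_over_kx_fps:
  assumes "integral_over_kx scale g"
  obtains n p where "Abs_fps g ^ n + (\<Sum>i<n. fps_of_kpoly scale (p i) * Abs_fps g ^ i) = 0"
proof -
  obtain n p where eq:
      "(\<lambda>m. apoly_pow g n m + (\<Sum>i<n. kpoly_act scale (p i) (apoly_pow g i) m)) = (\<lambda>_. 0)"
    using assms unfolding integral_over_kx_def by blast
  have "Abs_fps g ^ n + (\<Sum>i<n. fps_of_kpoly scale (p i) * Abs_fps g ^ i) = 0"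
    using eq by (simp add: fps_eq_iff fun_eq_iff apoly_pow_eq_fps_power fps_sum_nth
        fps_nth_inverse kpoly_act_eq_fps_mult)
  then show ?thesis by (rule that)
qed

lemma fps_of_kpoly_mult_mod_rees_kernel:
  assumes F: "F \<in> rees_fps Af"
  shows "fps_of_kpoly scale p * F - fps_scale scale (coeff p 0) F \<in> rees_kernel Af"
proof -
  define S where "S = Abs_fps (\<lambda>j. scale (coeff p (Suc j)) 1)"
  have "fps_of_kpoly scale p = fps_const (scale (coeff p 0) 1) + fps_X * S"
    by (rule fps_ext) (auto simp: fps_of_kpoly_def S_def)
  then have "fps_of_kpoly scale p * F - fps_scale scale (coeff p 0) F = fps_X * (S * F)"
    by (simp add: distrib_right fps_const_scale_mult mult.assoc)
  moreover have "S * F \<in> rees_fps Af"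
    unfolding rees_fps_def
  proof (intro CollectI allI)
    fix n
    have "scale (coeff p (Suc i)) 1 * F $ (n - i) \<in> Af n" for i
    proof -
      have "scale (coeff p (Suc i)) (F $ (n - i)) \<in> Af n"
        using F filtration_mono[of "n - i" n]
        by (auto simp: rees_fps_def intro!: module.subspace_scale[OF module subspace_filtration])
      then show ?thesis by (metis scale_eq_mult)
    qed
    then show "(S * F) $ n \<in> Af n"
      unfolding fps_mult_nth S_def by (auto intro!: module.subspace_sum[OF module subspace_filtration])
  qed
  ultimately show ?thesis using fps_X_mult_in_rees_kernel by simp
qed

text \<open>Since \<open>W $ 0 = 0\<close>, the degree-\<open>m\<close> coefficient of \<open>F * W\<close> only involves coefficients of \<open>F\<close>
  of degree \<open>< m\<close>, so \<open>F $ m \<in> A\<^sub>m\<^sub>-\<^sub>1\<close> follows by strong induction.\<close>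
lemma rees_kernel_cancel:
  assumes FW: "F + F * W \<in> rees_kernel Af" and W: "W \<in> rees_fps Af" and W0: "W $ 0 = 0"
  shows "F \<in> rees_kernel Af"
  unfolding rees_kernel_def
proof (intro CollectI allI)
  fix m
  show "F $ m \<in> filt_prev Af m"
  proof (induction m rule: less_induct)
    case (less m)
    have "F $ i * W $ (m - i) \<in> filt_prev Af m" if "i \<le> m" for i
    proof (cases "i = m")
      case True
      then show ?thesis using W0 module.subspace_0[OF module subspace_filt_prev] by simp
    next
      case False
      with \<open>i \<le> m\<close> less W have "F $ i * W $ (m - i) \<in> filt_prev Af (i + (m - i))"
        unfolding rees_fps_def by (intro filt_prev_mult) auto
      with \<open>i \<le> m\<close> show ?thesis by simp
    qed
    then have "(F * W) $ m \<in> filt_prev Af m"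
      unfolding fps_mult_nth by (auto intro!: module.subspace_sum[OF module subspace_filt_prev])
    moreover have "(F + F * W) $ m \<in> filt_prev Af m"
      using FW unfolding rees_kernel_def by blast
    ultimately have "(F + F * W) $ m - (F * W) $ m \<in> filt_prev Af m"
      using module.subspace_diff[OF module subspace_filt_prev] by blast
    then show ?case by simp
  qed
qed

lemma rees_kernel_cancel_scaled:
  assumes FW: "fps_scale scale c F + F * W \<in> rees_kernel Af" and "c \<noteq> 0"
    and W: "W \<in> rees_fps Af" and W0: "W $ 0 = 0"
  shows "F \<in> rees_kernel Af"
proof (rule rees_kernel_cancel)
  have "fps_scale scale (inverse c) (fps_scale scale c F + F * W)
      = F + F * fps_scale scale (inverse c) W"
    using \<open>c \<noteq> 0\<close> by (simp add: fps_scale_add fps_scale_scale fps_scale_mult_right)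
  with rees_kernel_scale[OF FW, of "inverse c"]
  show "F + F * fps_scale scale (inverse c) W \<in> rees_kernel Af" by simp
  show "fps_scale scale (inverse c) W \<in> rees_fps Af" using W by (rule rees_fps_scale)
  show "fps_scale scale (inverse c) W $ 0 = 0"
    using W0 by (simp add: fps_scale_nth_0 module.scale_zero_right[OF module])
qed

lemma integral_relation_mod_rees_kernel:
  assumes G: "G \<in> rees_fps Af"
    and rel: "G ^ n + (\<Sum>i<n. fps_of_kpoly scale (p i) * G ^ i) = 0"
  obtains c where "c n \<noteq> 0" "(\<Sum>i\<le>n. fps_scale scale (c i) (G ^ Suc i)) \<in> rees_kernel Af"
proof -
  define c where "c i = (if i < n then coeff (p i) 0 else 1)" for i
  have "G ^ Suc n + (\<Sum>i<n. fps_of_kpoly scale (p i) * G ^ Suc i) = 0"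
    using arg_cong[OF rel, of "\<lambda>H. H * G"]
    by (simp add: distrib_right sum_distrib_right mult.assoc power_Suc2 del: power_Suc)
  then have relation_mod: "(\<Sum>i\<le>n. fps_scale scale (c i) (G ^ Suc i))
      = - (\<Sum>i<n. fps_of_kpoly scale (p i) * G ^ Suc i - fps_scale scale (coeff (p i) 0) (G ^ Suc i))"
    by (simp add: c_def sum_subtractf algebra_simps flip: lessThan_Suc_atMost)
  have "(\<Sum>i\<le>n. fps_scale scale (c i) (G ^ Suc i)) \<in> rees_kernel Af"
    unfolding relation_mod using G
    by (intro rees_kernel_uminus rees_kernel_sum fps_of_kpoly_mult_mod_rees_kernel rees_fps_power)
  moreover have "c n \<noteq> 0" by (simp add: c_def)
  ultimately show ?thesis by (intro that)
qed

text \<open>Vanishing lowest coefficients are absorbed into \<open>m\<close>; once \<open>c 0 \<noteq> 0\<close>, the relation reads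
  \<open>G\<^sup>m (c 0 + W) \<in> xR\<close> and the factor is cancelled.\<close>
lemma power_in_rees_kernel_if_relation:
  assumes G: "G \<in> rees_fps Af" and G0: "G $ 0 = 0" and "c n \<noteq> 0"
    and "(\<Sum>i\<le>n. fps_scale scale (c i) (G ^ (i + m))) \<in> rees_kernel Af"
  shows "\<exists>N\<ge>m. G ^ N \<in> rees_kernel Af"
  using assms(3,4)
proof (induction n arbitrary: c m)
  case 0
  then have "fps_scale scale (c 0) (G ^ m) + G ^ m * 0 \<in> rees_kernel Af" by simp
  then have "G ^ m \<in> rees_kernel Af"
    by (rule rees_kernel_cancel_scaled[OF _ \<open>c 0 \<noteq> 0\<close>])
      (simp_all add: rees_fps_def module.subspace_0[OF module subspace_filtration])
  then show ?case by blast
next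
  case (Suc n)
  have sum_eq: "(\<Sum>i\<le>Suc n. fps_scale scale (c i) (G ^ (i + m)))
      = fps_scale scale (c 0) (G ^ m) + (\<Sum>i\<le>n. fps_scale scale (c (Suc i)) (G ^ (i + Suc m)))"
    unfolding sum.atMost_Suc_shift by simp
  show ?case
  proof (cases "c 0 = 0")
    case True
    have "(\<Sum>i\<le>n. fps_scale scale (c (Suc i)) (G ^ (i + Suc m))) \<in> rees_kernel Af"
      using Suc.prems(2) unfolding sum_eq True fps_scale_zero add_0 .
    with Suc.IH[of "\<lambda>i. c (Suc i)" "Suc m"] Suc.prems(1)
    obtain N where "N \<ge> Suc m" "G ^ N \<in> rees_kernel Af" by blast
    then show ?thesis by (auto intro: Suc_leD)
  next
    case False
    define W where "W = (\<Sum>i\<le>n. fps_scale scale (c (Suc i)) (G ^ Suc i))"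
    have "G ^ (i + Suc m) = G ^ m * G ^ Suc i" for i
      by (simp only: add.commute[of i "Suc m"] add_Suc_shift power_add)
    then have W_eq: "(\<Sum>i\<le>n. fps_scale scale (c (Suc i)) (G ^ (i + Suc m))) = G ^ m * W"
      unfolding W_def sum_distrib_left by (simp only: fps_scale_mult_right)
    have W: "W \<in> rees_fps Af"
      unfolding W_def using G by (intro rees_fps_sum rees_fps_scale rees_fps_power)
    have W0: "W $ 0 = 0"
      using G0 by (simp add: W_def fps_sum_nth fps_scale_nth_0 fps_power_zeroth
          module.scale_zero_right[OF module])
    have "fps_scale scale (c 0) (G ^ m) + G ^ m * W \<in> rees_kernel Af"
      using Suc.prems(2) unfolding sum_eq W_eq .
    then have "G ^ m \<in> rees_kernel Af"
      using False W W0 by (rule rees_kernel_cancel_scaled)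
    then show ?thesis by blast
  qed
qed

end

theorem corollary5p3:
  fixes scale :: "'k::field \<Rightarrow> 'a::ring_1 \<Rightarrow> 'a"
    and Af :: "nat \<Rightarrow> 'a set"
  assumes "k_algebra scale"
    and "algebra_filtration scale Af"
    and "\<forall>r \<in> rees_algebra Af. integral_over_kx scale r"
  shows "gr_pos_nil Af"
  unfolding gr_pos_nil_def
proof (intro allI impI)
  interpret filtered_algebra scale Af using assms(1,2) by unfold_locales
  fix g assume g: "gr_rep Af g \<and> g 0 = 0"
  define G where "G = Abs_fps g"
  have G: "G \<in> rees_fps Af" and G0: "G $ 0 = 0"
    using g unfolding G_def rees_fps_def gr_rep_def by simp_all
  have "integral_over_kx scale g"
    using g assms(3) unfolding gr_rep_def rees_algebra_def by blast
  then obtain n p where "G ^ n + (\<Sum>i<n. fps_of_kpoly scale (p i) * G ^ i) = 0"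
    unfolding G_def by (rule integral_over_kx_fps)
  with G obtain c where "c n \<noteq> 0" "(\<Sum>i\<le>n. fps_scale scale (c i) (G ^ (i + 1))) \<in> rees_kernel Af"
    by (rule integral_relation_mod_rees_kernel) simp
  with G G0 obtain N where "N \<ge> 1" "G ^ N \<in> rees_kernel Af"
    using power_in_rees_kernel_if_relation by blast
  then show "\<exists>N\<ge>1. gr_is_zero Af (apoly_pow g N)"
    unfolding gr_is_zero_def apoly_pow_eq_fps_power rees_kernel_def G_def by auto
qed

end
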